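(* There exists a function $\delta$, defined on pairs of partitions, with the following two properties. (i) For every $T\ge 1$, every $K\ge 1$ and every two partitions $P=\{P_1,\dots,P_K\}$ and $Q=\{Q_1,\dots,Q_K\}$ of $\{1,\dots,T\}$ into $K$ nonempty clusters each, with clusters indexed so that $Q_k$ is regarded as the counterpart of $P_k$, we have $$\|M_P-M_Q\|_F^2 \;=\; 2\sum_{k=1}^K \frac{\epsilon_{k\to}+\epsilon_{\to k}}{|P_k|}\,\bigl(1+\delta(P,Q)\bigr).$$ (ii) The function $\delta$ satisfies $$\sup\bigl\{\,|\delta(P,Q)| \;:\; T\ge 1,\ K\ge 1,\ P,Q \text{ as in (i)},\ K\cdot m(P,Q)\le \epsilon\,\bigr\}\;\longrightarrow\;0 \quad\text{as } \epsilon\to 0 .$$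
   Context: For a partition $P$ of $\{1,\dots,T\}$ into nonempty clusters $P_1,\dots,P_K$, its rescaled equivalence matrix $M_P\in\mathbb{R}^{T\times T}$ is defined by $(M_P)_{ij}=1/|P_k|$ if $i$ and $j$ both lie in the same cluster $P_k$, and $(M_P)_{ij}=0$ otherwise; equivalently $M_P=Y(Y^\top Y)^{-1}Y^\top$ where $Y\in\{0,1\}^{T\times K}$ is the assignment matrix with $Y_{ik}=1$ iff $i\in P_k$. $\|\cdot\|_F$ is the Frobenius norm. For two partitions $P,Q$ as in the claim: for $k\ne l$, $\epsilon_{k\to l}=|P_k\cap Q_l|$; the outer flow is $\epsilon_{k\to}=\sum_{l\ne k}\epsilon_{k\to l}$; the inner flow is $\epsilon_{\to k}=\sum_{j\ne k}\epsilon_{j\to k}$; and $m(P,Q)=\max_{k\ne l}\dfrac{\epsilon_{k\to l}}{\min(|P_k|,|P_l|)}$ (with $m(P,Q)=0$ if $K=1$). *)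

theory Defs
  imports Main "HOL-Library.Disjoint_Sets" Complex_Main
begin

text \<open>An indexed partition of {1..T} into K nonempty clusters P 1, ..., P K
  (values of P outside {1..K} are irrelevant).\<close>
definition is_partition :: "nat \<Rightarrow> nat \<Rightarrow> (nat \<Rightarrow> nat set) \<Rightarrow> bool" where
  "is_partition T K P \<longleftrightarrow>
     (\<forall>k\<in>{1..K}. P k \<noteq> {}) \<and>
     (\<forall>k\<in>{1..K}. \<forall>l\<in>{1..K}. k \<noteq> l \<longrightarrow> P k \<inter> P l = {}) \<and>
     (\<Union>k\<in>{1..K}. P k) = {1..T}"

text \<open>Rescaled equivalence matrix, entries indexed by i, j in {1..T}:
  (M_P) i j = 1/|P_k| if i, j both lie in P_k, else 0 (clusters are disjoint,
  so at most one summand is nonzero).\<close>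
definition resc_equiv :: "nat \<Rightarrow> (nat \<Rightarrow> nat set) \<Rightarrow> nat \<Rightarrow> nat \<Rightarrow> real" where
  "resc_equiv K P i j = (\<Sum>k\<in>{1..K}. if i \<in> P k \<and> j \<in> P k then 1 / real (card (P k)) else 0)"

definition frob_sq_diff :: "nat \<Rightarrow> (nat \<Rightarrow> nat \<Rightarrow> real) \<Rightarrow> (nat \<Rightarrow> nat \<Rightarrow> real) \<Rightarrow> real" where
  "frob_sq_diff T A B = (\<Sum>i\<in>{1..T}. \<Sum>j\<in>{1..T}. (A i j - B i j)\<^sup>2)"

definition flow :: "(nat \<Rightarrow> nat set) \<Rightarrow> (nat \<Rightarrow> nat set) \<Rightarrow> nat \<Rightarrow> nat \<Rightarrow> nat" where
  "flow P Q k l = card (P k \<inter> Q l)"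

definition out_flow :: "nat \<Rightarrow> (nat \<Rightarrow> nat set) \<Rightarrow> (nat \<Rightarrow> nat set) \<Rightarrow> nat \<Rightarrow> nat" where
  "out_flow K P Q k = (\<Sum>l\<in>{1..K} - {k}. flow P Q k l)"

definition in_flow :: "nat \<Rightarrow> (nat \<Rightarrow> nat set) \<Rightarrow> (nat \<Rightarrow> nat set) \<Rightarrow> nat \<Rightarrow> nat" where
  "in_flow K P Q k = (\<Sum>j\<in>{1..K} - {k}. flow P Q j k)"

definition m_PQ :: "nat \<Rightarrow> (nat \<Rightarrow> nat set) \<Rightarrow> (nat \<Rightarrow> nat set) \<Rightarrow> real" where
  "m_PQ K P Q = (if K = 1 then 0 else
     Max {real (flow P Q k l) / real (min (card (P k)) (card (P l))) | k l.
            k \<in> {1..K} \<and> l \<in> {1..K} \<and> k \<noteq> l})"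

end

theory Submission
  imports Defs
begin

text \<open>Write \<open>p\<^sub>k = |P\<^sub>k|\<close>, \<open>q\<^sub>l = |Q\<^sub>l|\<close> and \<open>n\<^sub>k\<^sub>l = |P\<^sub>k \<inter> Q\<^sub>l|\<close>. Expanding the square gives
  \<open>\<parallel>M\<^sub>P - M\<^sub>Q\<parallel>\<^sup>2 = 2K - 2 \<Sum>\<^sub>k\<^sub>l n\<^sub>k\<^sub>l\<^sup>2 / (p\<^sub>k q\<^sub>l)\<close>; substituting \<open>p\<^sub>k = n\<^sub>k\<^sub>k + \<epsilon>\<^sub>k\<^sub>\<rightarrow>\<close> and
  \<open>q\<^sub>k = n\<^sub>k\<^sub>k + \<epsilon>\<^sub>\<rightarrow>\<^sub>k\<close> in the diagonal terms turns this into \<open>2 (S - E)\<close>, where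
  \<open>S = \<Sum>\<^sub>k (\<epsilon>\<^sub>k\<^sub>\<rightarrow> + \<epsilon>\<^sub>\<rightarrow>\<^sub>k) / p\<^sub>k\<close> and \<open>E = \<Sum>\<^sub>k \<epsilon>\<^sub>\<rightarrow>\<^sub>k\<^sup>2 / (p\<^sub>k q\<^sub>k) + \<Sum>\<^sub>k\<^sub>\<noteq>\<^sub>l n\<^sub>k\<^sub>l\<^sup>2 / (p\<^sub>k q\<^sub>l)\<close>,
  so \<open>\<delta> = -E/S\<close>. Each term of \<open>E\<close> is a term of \<open>S\<close> times a ratio \<open>n / q\<^sub>l\<close> with
  \<open>n \<le> \<epsilon>\<^sub>\<rightarrow>\<^sub>l\<close>. Every flow out of or into \<open>P\<^sub>k\<close> is at most \<open>m p\<^sub>k\<close>, so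
  \<open>\<epsilon>\<^sub>k\<^sub>\<rightarrow>, \<epsilon>\<^sub>\<rightarrow>\<^sub>k \<le> K m p\<^sub>k\<close>; once \<open>K m \<le> 1/2\<close> this forces \<open>q\<^sub>k \<ge> p\<^sub>k / 2\<close>, hence all those
  ratios are at most \<open>2 K m\<close> and \<open>|\<delta>| \<le> 2 K m\<close>.\<close>

lemma is_partition_subset:
  "is_partition T K P \<Longrightarrow> k \<in> {1..K} \<Longrightarrow> P k \<subseteq> {1..T}"
  unfolding is_partition_def by blast

lemma is_partition_finite:
  "is_partition T K P \<Longrightarrow> k \<in> {1..K} \<Longrightarrow> finite (P k)"
  by (meson finite_atLeastAtMost finite_subset is_partition_subset)

lemma is_partition_card_pos:
  "is_partition T K P \<Longrightarrow> k \<in> {1..K} \<Longrightarrow> card (P k) > 0"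
  using is_partition_finite unfolding is_partition_def by (simp add: card_gt_0_iff)

lemma is_partition_disjoint:
  "is_partition T K P \<Longrightarrow> k \<in> {1..K} \<Longrightarrow> l \<in> {1..K} \<Longrightarrow> k \<noteq> l \<Longrightarrow> P k \<inter> P l = {}"
  unfolding is_partition_def by blast

lemma card_eq_sum_card_Int_partition:
  assumes "is_partition T K Q" "A \<subseteq> {1..T}"
  shows "card A = (\<Sum>l\<in>{1..K}. card (A \<inter> Q l))"
proof -
  have fin: "finite A" using assms(2) finite_subset by blast
  have "A = (\<Union>l\<in>{1..K}. A \<inter> Q l)"
    using assms unfolding is_partition_def by blast
  also have "card \<dots> = (\<Sum>l\<in>{1..K}. card (A \<inter> Q l))"
  proof (rule card_UN_disjoint)
    show "\<forall>l\<in>{1..K}. finite (A \<inter> Q l)" using fin by blast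
    show "\<forall>k\<in>{1..K}. \<forall>l\<in>{1..K}. k \<noteq> l \<longrightarrow> A \<inter> Q k \<inter> (A \<inter> Q l) = {}"
      using is_partition_disjoint[OF assms(1)] by blast
  qed simp
  finally show ?thesis .
qed

lemma sum_sum_if_both_mem:
  fixes c :: "'a::comm_semiring_1"
  assumes "A \<subseteq> S" "finite S"
  shows "(\<Sum>i\<in>S. \<Sum>j\<in>S. if i \<in> A \<and> j \<in> A then c else 0) = of_nat (card A)^2 * c"
proof -
  have "(\<Sum>i\<in>S. \<Sum>j\<in>S. if i \<in> A \<and> j \<in> A then c else 0)
      = (\<Sum>i\<in>S. if i \<in> A then of_nat (card A) * c else 0)"
    using assms by (intro sum.cong refl) (auto simp: sum.If_cases Int_absorb1)
  also have "\<dots> = of_nat (card A)^2 * c"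
    using assms by (simp add: sum.If_cases Int_absorb1 power2_eq_square mult.assoc)
  finally show ?thesis .
qed
lemma sum_rotate3:
  "(\<Sum>a\<in>A. \<Sum>b\<in>B. \<Sum>c\<in>C. g a b c) = (\<Sum>b\<in>B. \<Sum>c\<in>C. \<Sum>a\<in>A. g a b c)"
proof -
  have "(\<Sum>a\<in>A. \<Sum>b\<in>B. \<Sum>c\<in>C. g a b c) = (\<Sum>b\<in>B. \<Sum>a\<in>A. \<Sum>c\<in>C. g a b c)"
    by (rule sum.swap)
  also have "\<dots> = (\<Sum>b\<in>B. \<Sum>c\<in>C. \<Sum>a\<in>A. g a b c)"
    by (intro sum.cong refl sum.swap)
  finally show ?thesis .
qed

lemma sum_swap_pairs:
  "(\<Sum>i\<in>A. \<Sum>j\<in>B. \<Sum>k\<in>C. \<Sum>l\<in>D. f i j k l) = (\<Sum>k\<in>C. \<Sum>l\<in>D. \<Sum>i\<in>A. \<Sum>j\<in>B. f i j k l)"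
proof -
  have "(\<Sum>i\<in>A. \<Sum>j\<in>B. \<Sum>k\<in>C. \<Sum>l\<in>D. f i j k l) = (\<Sum>i\<in>A. \<Sum>k\<in>C. \<Sum>l\<in>D. \<Sum>j\<in>B. f i j k l)"
    by (intro sum.cong refl sum_rotate3)
  also have "\<dots> = (\<Sum>k\<in>C. \<Sum>l\<in>D. \<Sum>i\<in>A. \<Sum>j\<in>B. f i j k l)"
    by (rule sum_rotate3)
  finally show ?thesis .
qed

lemma sum_sum_resc_equiv_mult:
  assumes "\<forall>k\<in>{1..K}. P k \<subseteq> {1..T}"
  shows "(\<Sum>i\<in>{1..T}. \<Sum>j\<in>{1..T}. resc_equiv K P i j * resc_equiv K Q i j)
     = (\<Sum>k\<in>{1..K}. \<Sum>l\<in>{1..K}. real (card (P k \<inter> Q l))^2 / (real (card (P k)) * real (card (Q l))))"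
proof -
  let ?c = "\<lambda>k l. 1 / (real (card (P k)) * real (card (Q l)))"
  let ?f = "\<lambda>k l i j. if i \<in> P k \<inter> Q l \<and> j \<in> P k \<inter> Q l then ?c k l else 0"
  have "(\<Sum>i\<in>{1..T}. \<Sum>j\<in>{1..T}. resc_equiv K P i j * resc_equiv K Q i j)
      = (\<Sum>i\<in>{1..T}. \<Sum>j\<in>{1..T}. \<Sum>k\<in>{1..K}. \<Sum>l\<in>{1..K}. ?f k l i j)"
    unfolding resc_equiv_def sum_product by (intro sum.cong refl) auto
  also have "\<dots> = (\<Sum>k\<in>{1..K}. \<Sum>l\<in>{1..K}. \<Sum>i\<in>{1..T}. \<Sum>j\<in>{1..T}. ?f k l i j)"
    by (rule sum_swap_pairs)
  also have "\<dots> = (\<Sum>k\<in>{1..K}. \<Sum>l\<in>{1..K}. real (card (P k \<inter> Q l))^2 * ?c k l)"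
    using assms by (intro sum.cong refl sum_sum_if_both_mem) auto
  finally show ?thesis by simp
qed

lemma sum_sum_resc_equiv_square:
  assumes "is_partition T K P"
  shows "(\<Sum>i\<in>{1..T}. \<Sum>j\<in>{1..T}. resc_equiv K P i j * resc_equiv K P i j) = real K"
proof -
  have "(\<Sum>i\<in>{1..T}. \<Sum>j\<in>{1..T}. resc_equiv K P i j * resc_equiv K P i j)
      = (\<Sum>k\<in>{1..K}. \<Sum>l\<in>{1..K}. real (card (P k \<inter> P l))^2 / (real (card (P k)) * real (card (P l))))"
    using is_partition_subset[OF assms] by (intro sum_sum_resc_equiv_mult) blast
  also have "\<dots> = (\<Sum>k\<in>{1..K}. \<Sum>l\<in>{1..K}. if k = l then 1 else 0)"
  proof (intro sum.cong refl)
    fix k l assume kl: "k \<in> {1..K}" "l \<in> {1..K}"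
    show "real (card (P k \<inter> P l))^2 / (real (card (P k)) * real (card (P l))) = (if k = l then 1 else 0)"
    proof (cases "k = l")
      case True
      with is_partition_card_pos[OF assms kl(1)] show ?thesis by (simp add: power2_eq_square)
    next
      case False
      with is_partition_disjoint[OF assms kl] show ?thesis by simp
    qed
  qed
  also have "\<dots> = real K" by simp
  finally show ?thesis .
qed

lemma frob_sq_diff_resc_equiv:
  assumes "is_partition T K P" "is_partition T K Q"
  shows "frob_sq_diff T (resc_equiv K P) (resc_equiv K Q) = 2 * real K
     - 2 * (\<Sum>k\<in>{1..K}. \<Sum>l\<in>{1..K}. real (card (P k \<inter> Q l))^2 / (real (card (P k)) * real (card (Q l))))"
proof -
  have "(a - b)^2 = a * a + b * b - 2 * (a * b)" for a b :: real
    by (simp add: power2_eq_square algebra_simps)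
  then have "frob_sq_diff T (resc_equiv K P) (resc_equiv K Q) =
     (\<Sum>i\<in>{1..T}. \<Sum>j\<in>{1..T}. resc_equiv K P i j * resc_equiv K P i j)
     + (\<Sum>i\<in>{1..T}. \<Sum>j\<in>{1..T}. resc_equiv K Q i j * resc_equiv K Q i j)
     - 2 * (\<Sum>i\<in>{1..T}. \<Sum>j\<in>{1..T}. resc_equiv K P i j * resc_equiv K Q i j)"
    unfolding frob_sq_diff_def by (simp add: sum.distrib sum_subtractf sum_distrib_left)
  also have "(\<Sum>i\<in>{1..T}. \<Sum>j\<in>{1..T}. resc_equiv K P i j * resc_equiv K Q i j)
      = (\<Sum>k\<in>{1..K}. \<Sum>l\<in>{1..K}. real (card (P k \<inter> Q l))^2 / (real (card (P k)) * real (card (Q l))))"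
    using is_partition_subset[OF assms(1)] by (intro sum_sum_resc_equiv_mult) blast
  finally show ?thesis
    by (simp only: sum_sum_resc_equiv_square[OF assms(1)] sum_sum_resc_equiv_square[OF assms(2)])
qed

lemma card_eq_flow_self_add_out_flow:
  assumes "is_partition T K P" "is_partition T K Q" "k \<in> {1..K}"
  shows "card (P k) = flow P Q k k + out_flow K P Q k"
  using card_eq_sum_card_Int_partition[OF assms(2) is_partition_subset[OF assms(1,3)]] assms(3)
  by (simp add: out_flow_def flow_def sum.remove)

lemma card_eq_flow_self_add_in_flow:
  assumes "is_partition T K P" "is_partition T K Q" "k \<in> {1..K}"
  shows "card (Q k) = flow P Q k k + in_flow K P Q k"
  using card_eq_sum_card_Int_partition[OF assms(1) is_partition_subset[OF assms(2,3)]] assms(3)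
  by (simp add: in_flow_def flow_def sum.remove Int_commute)

lemma flow_le_in_flow:
  assumes "is_partition T K P" "k \<in> {1..K}" "l \<in> {1..K}" "k \<noteq> l"
  shows "flow P Q k l \<le> in_flow K P Q l"
  unfolding in_flow_def using assms by (intro member_le_sum) auto

definition rel_flow :: "nat \<Rightarrow> (nat \<Rightarrow> nat set) \<Rightarrow> (nat \<Rightarrow> nat set) \<Rightarrow> real" where
  "rel_flow K P Q = (\<Sum>k\<in>{1..K}. real (out_flow K P Q k + in_flow K P Q k) / real (card (P k)))"

definition rel_flow_defect :: "nat \<Rightarrow> (nat \<Rightarrow> nat set) \<Rightarrow> (nat \<Rightarrow> nat set) \<Rightarrow> real" where
  "rel_flow_defect K P Q =
     (\<Sum>k\<in>{1..K}. real (in_flow K P Q k)^2 / (real (card (P k)) * real (card (Q k))))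
     + (\<Sum>k\<in>{1..K}. \<Sum>l\<in>{1..K}-{k}. real (flow P Q k l)^2 / (real (card (P k)) * real (card (Q l))))"

lemma rel_flow_nonneg: "rel_flow K P Q \<ge> 0"
  unfolding rel_flow_def by (intro sum_nonneg) simp

lemma rel_flow_defect_nonneg: "rel_flow_defect K P Q \<ge> 0"
  unfolding rel_flow_defect_def by (intro add_nonneg_nonneg sum_nonneg) simp_all

lemma one_minus_sq_div_mult:
  fixes n u v :: real
  assumes "n + u \<noteq> 0" "n + v \<noteq> 0"
  shows "1 - n^2 / ((n + u) * (n + v)) = (u + v) / (n + u) - v^2 / ((n + u) * (n + v))"
proof -
  let ?D = "(n + u) * (n + v)"
  have "1 - n^2 / ?D = (?D - n^2) / ?D"
    using assms by (simp add: diff_divide_distrib)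
  also have "\<dots> = ((u + v) * (n + v) - v^2) / ?D"
    by (simp add: power2_eq_square algebra_simps)
  also have "\<dots> = (u + v) / (n + u) - v^2 / ?D"
    using assms by (simp add: diff_divide_distrib)
  finally show ?thesis .
qed

lemma frob_sq_diff_eq_rel_flow:
  assumes "is_partition T K P" "is_partition T K Q"
  shows "frob_sq_diff T (resc_equiv K P) (resc_equiv K Q) = 2 * (rel_flow K P Q - rel_flow_defect K P Q)"
proof -
  let ?r = "\<lambda>k l. real (flow P Q k l)^2 / (real (card (P k)) * real (card (Q l)))"
  have diag: "1 - ?r k k = real (out_flow K P Q k + in_flow K P Q k) / real (card (P k))
      - real (in_flow K P Q k)^2 / (real (card (P k)) * real (card (Q k)))"
    if k: "k \<in> {1..K}" for k
    using one_minus_sq_div_mult[of "real (flow P Q k k)" "real (out_flow K P Q k)" "real (in_flow K P Q k)"]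
      card_eq_flow_self_add_out_flow[OF assms k] card_eq_flow_self_add_in_flow[OF assms k]
      is_partition_card_pos[OF assms(1) k] is_partition_card_pos[OF assms(2) k]
    by simp
  have "frob_sq_diff T (resc_equiv K P) (resc_equiv K Q)
      = 2 * (\<Sum>k\<in>{1..K}. (1 - ?r k k) - (\<Sum>l\<in>{1..K}-{k}. ?r k l))"
    unfolding frob_sq_diff_resc_equiv[OF assms]
    by (simp add: sum_subtractf sum.remove flow_def algebra_simps)
  also have "\<dots> = 2 * (rel_flow K P Q - rel_flow_defect K P Q)"
    unfolding rel_flow_def rel_flow_defect_def using diag by (simp add: sum_subtractf)
  finally show ?thesis .
qed

lemma sq_div_mult_le:
  fixes i p q d :: real
  assumes "i \<ge> 0" "p > 0" "q > 0" "i \<le> d * q"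
  shows "i^2 / (p * q) \<le> d * i / p"
proof -
  have "i / q \<le> d" using assms by (simp add: divide_le_eq)
  then have "(i / p) * (i / q) \<le> (i / p) * d" by (rule mult_left_mono) (use assms in simp)
  then show ?thesis by (simp add: power2_eq_square mult.commute)
qed

lemma rel_flow_defect_le:
  assumes "is_partition T K P" "is_partition T K Q"
    and in_flow_le: "\<And>k. k \<in> {1..K} \<Longrightarrow> real (in_flow K P Q k) \<le> d * real (card (Q k))"
  shows "rel_flow_defect K P Q \<le> d * rel_flow K P Q"
proof -
  have p: "real (card (P k)) > 0" and q: "real (card (Q k)) > 0" if "k \<in> {1..K}" for k
    using is_partition_card_pos[OF assms(1) that] is_partition_card_pos[OF assms(2) that] by simp_all
  have diag: "real (in_flow K P Q k)^2 / (real (card (P k)) * real (card (Q k)))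
      \<le> d * real (in_flow K P Q k) / real (card (P k))" if k: "k \<in> {1..K}" for k
    using p[OF k] q[OF k] in_flow_le[OF k] by (intro sq_div_mult_le) simp_all
  have off_diag: "real (flow P Q k l)^2 / (real (card (P k)) * real (card (Q l)))
      \<le> d * real (flow P Q k l) / real (card (P k))"
    if k: "k \<in> {1..K}" and l: "l \<in> {1..K} - {k}" for k l
  proof (rule sq_div_mult_le)
    have "real (flow P Q k l) \<le> real (in_flow K P Q l)"
      using flow_le_in_flow[OF assms(1) k] l by auto
    also have "\<dots> \<le> d * real (card (Q l))" using in_flow_le l by simp
    finally show "real (flow P Q k l) \<le> d * real (card (Q l))" .
  qed (use p[OF k] q l in simp_all)
  have "rel_flow_defect K P Q \<le> (\<Sum>k\<in>{1..K}. d * real (in_flow K P Q k) / real (card (P k)))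
      + (\<Sum>k\<in>{1..K}. \<Sum>l\<in>{1..K}-{k}. d * real (flow P Q k l) / real (card (P k)))"
    unfolding rel_flow_defect_def using diag off_diag by (intro add_mono sum_mono) auto
  also have "\<dots> = d * rel_flow K P Q"
    unfolding rel_flow_def out_flow_def
    by (simp add: sum_divide_distrib sum_distrib_left add_divide_distrib sum.distrib algebra_simps)
  finally show ?thesis .
qed

lemma rel_flow_defect_le_rel_flow:
  assumes "is_partition T K P" "is_partition T K Q"
  shows "rel_flow_defect K P Q \<le> rel_flow K P Q"
  using rel_flow_defect_le[OF assms, of 1] card_eq_flow_self_add_in_flow[OF assms] by simp

lemma flow_le_m_PQ_mult_min:
  assumes "is_partition T K P" "k \<in> {1..K}" "l \<in> {1..K}" "k \<noteq> l"
  shows "real (flow P Q k l) \<le> m_PQ K P Q * min (real (card (P k))) (real (card (P l)))"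
proof -
  let ?ratio = "\<lambda>k l. real (flow P Q k l) / real (min (card (P k)) (card (P l)))"
  let ?R = "{?ratio k l | k l. k \<in> {1..K} \<and> l \<in> {1..K} \<and> k \<noteq> l}"
  have "finite ?R"
    by (rule finite_subset[of _ "(\<lambda>(k, l). ?ratio k l) ` ({1..K} \<times> {1..K})"]) auto
  moreover have "?ratio k l \<in> ?R"
    using assms by blast
  ultimately have "?ratio k l \<le> Max ?R"
    by (rule Max_ge)
  moreover have "K \<noteq> 1" using assms(2-4) by auto
  ultimately have le: "?ratio k l \<le> m_PQ K P Q" unfolding m_PQ_def by simp
  have "real (min (card (P k)) (card (P l))) > 0"
    using is_partition_card_pos[OF assms(1,2)] is_partition_card_pos[OF assms(1,3)] by simp
  then have "real (flow P Q k l) = ?ratio k l * real (min (card (P k)) (card (P l)))"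
    by simp
  also have "\<dots> \<le> m_PQ K P Q * real (min (card (P k)) (card (P l)))"
    using le by (rule mult_right_mono) simp
  finally show ?thesis by simp
qed

lemma m_PQ_nonneg:
  assumes "is_partition T K P" "K \<ge> 1"
  shows "m_PQ K P Q \<ge> 0"
proof (cases "K = 1")
  case True
  then show ?thesis unfolding m_PQ_def by simp
next
  case False
  then have one: "1 \<in> {1..K}" and two: "2 \<in> {1..K}" using assms(2) by auto
  have "0 \<le> real (flow P Q 1 2)" by simp
  also have "\<dots> \<le> m_PQ K P Q * min (real (card (P 1))) (real (card (P 2)))"
    by (rule flow_le_m_PQ_mult_min[OF assms(1) one two]) simp
  finally have "0 \<le> m_PQ K P Q * min (real (card (P 1))) (real (card (P 2)))" .
  moreover have "min (real (card (P 1))) (real (card (P 2))) > 0"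
    using is_partition_card_pos[OF assms(1) one] is_partition_card_pos[OF assms(1) two] by simp
  ultimately show ?thesis by (metis not_le zero_le_mult_iff)
qed

lemma out_flow_in_flow_le:
  assumes "is_partition T K P" "k \<in> {1..K}"
  shows "real (out_flow K P Q k) \<le> real K * m_PQ K P Q * real (card (P k))"
    and "real (in_flow K P Q k) \<le> real K * m_PQ K P Q * real (card (P k))"
proof -
  let ?m = "m_PQ K P Q"
  let ?b = "?m * real (card (P k))"
  have m: "?m \<ge> 0" using m_PQ_nonneg[OF assms(1)] assms(2) by simp
  have card: "card ({1..K} - {k}) \<le> K"
    using card_Diff_subset[of "{k}" "{1..K}"] assms(2) by simp
  have sum_le: "(\<Sum>l\<in>{1..K} - {k}. g l) \<le> real K * ?b"
    if "\<And>l. l \<in> {1..K} - {k} \<Longrightarrow> g l \<le> ?b" for g :: "nat \<Rightarrow> real"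
  proof -
    have "(\<Sum>l\<in>{1..K} - {k}. g l) \<le> real (card ({1..K} - {k})) * ?b"
      using that by (rule sum_bounded_above)
    also have "\<dots> \<le> real K * ?b"
      using card m by (intro mult_right_mono) simp_all
    finally show ?thesis .
  qed
  have "real (flow P Q k l) \<le> ?b" "real (flow P Q l k) \<le> ?b" if l: "l \<in> {1..K} - {k}" for l
  proof -
    have "real (flow P Q k l) \<le> ?m * min (real (card (P k))) (real (card (P l)))"
      using l by (intro flow_le_m_PQ_mult_min[OF assms]) auto
    also have "\<dots> \<le> ?b" using m by (intro mult_left_mono) simp_all
    finally show "real (flow P Q k l) \<le> ?b" .
    have "real (flow P Q l k) \<le> ?m * min (real (card (P l))) (real (card (P k)))"
      using l by (intro flow_le_m_PQ_mult_min[OF assms(1) _ assms(2)]) auto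
    also have "\<dots> \<le> ?b" using m by (intro mult_left_mono) simp_all
    finally show "real (flow P Q l k) \<le> ?b" .
  qed
  then show "real (out_flow K P Q k) \<le> real K * ?m * real (card (P k))"
    and "real (in_flow K P Q k) \<le> real K * ?m * real (card (P k))"
    unfolding out_flow_def in_flow_def using sum_le by (simp_all add: mult.assoc)
qed

lemma card_le_two_mult_card:
  assumes "is_partition T K P" "is_partition T K Q" "k \<in> {1..K}" "real K * m_PQ K P Q \<le> 1/2"
  shows "real (card (P k)) \<le> 2 * real (card (Q k))"
proof -
  have "real (out_flow K P Q k) \<le> real K * m_PQ K P Q * real (card (P k))"
    by (rule out_flow_in_flow_le(1)[OF assms(1,3)])
  also have "\<dots> \<le> 1/2 * real (card (P k))"
    using assms(4) by (rule mult_right_mono) simp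
  finally show ?thesis
    using card_eq_flow_self_add_out_flow[OF assms(1-3)] card_eq_flow_self_add_in_flow[OF assms(1-3)]
    by simp
qed

lemma rel_flow_defect_le_small_m_PQ:
  assumes "is_partition T K P" "is_partition T K Q" "real K * m_PQ K P Q \<le> 1/2"
  shows "rel_flow_defect K P Q \<le> 2 * (real K * m_PQ K P Q) * rel_flow K P Q"
proof (rule rel_flow_defect_le[OF assms(1,2)])
  fix k assume k: "k \<in> {1..K}"
  have "real K * m_PQ K P Q \<ge> 0" using m_PQ_nonneg[OF assms(1)] k by simp
  then have "real (in_flow K P Q k) \<le> real K * m_PQ K P Q * (2 * real (card (Q k)))"
    using out_flow_in_flow_le(2)[OF assms(1) k] card_le_two_mult_card[OF assms(1,2) k assms(3)]
    by (meson mult_left_mono order_trans)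
  then show "real (in_flow K P Q k) \<le> 2 * (real K * m_PQ K P Q) * real (card (Q k))"
    by (simp add: algebra_simps)
qed

text \<open>If \<open>rel_flow K P Q = 0\<close> then also \<open>rel_flow_defect K P Q = 0\<close>, and \<open>x / 0 = 0\<close> gives \<open>\<delta> = 0\<close>.\<close>
definition flow_delta :: "nat \<Rightarrow> (nat \<Rightarrow> nat set) \<Rightarrow> (nat \<Rightarrow> nat set) \<Rightarrow> real" where
  "flow_delta K P Q = - rel_flow_defect K P Q / rel_flow K P Q"

lemma frob_sq_diff_eq_flow_delta:
  assumes "is_partition T K P" "is_partition T K Q"
  shows "frob_sq_diff T (resc_equiv K P) (resc_equiv K Q) = 2 * rel_flow K P Q * (1 + flow_delta K P Q)"
proof (cases "rel_flow K P Q = 0")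
  case True
  then have "rel_flow_defect K P Q = 0"
    using rel_flow_defect_le_rel_flow[OF assms] rel_flow_defect_nonneg[of K P Q] by simp
  with True show ?thesis by (simp add: frob_sq_diff_eq_rel_flow[OF assms])
next
  case False
  then show ?thesis by (simp add: frob_sq_diff_eq_rel_flow[OF assms] flow_delta_def field_simps)
qed

lemma abs_flow_delta_le:
  assumes "is_partition T K P" "is_partition T K Q" "K \<ge> 1" "real K * m_PQ K P Q \<le> 1/2"
  shows "\<bar>flow_delta K P Q\<bar> \<le> 2 * (real K * m_PQ K P Q)"
proof (cases "rel_flow K P Q = 0")
  case True
  then show ?thesis using m_PQ_nonneg[OF assms(1,3)] by (simp add: flow_delta_def)
next
  case False
  then have "rel_flow K P Q > 0" using rel_flow_nonneg[of K P Q] by simp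
  then show ?thesis
    using rel_flow_defect_le_small_m_PQ[OF assms(1,2,4)] rel_flow_defect_nonneg[of K P Q]
    by (simp add: flow_delta_def divide_le_eq)
qed

theorem theoremA:
  shows "\<exists>\<delta> :: nat \<Rightarrow> nat \<Rightarrow> (nat \<Rightarrow> nat set) \<Rightarrow> (nat \<Rightarrow> nat set) \<Rightarrow> real.
    (\<forall>T K P Q. T \<ge> 1 \<longrightarrow> K \<ge> 1 \<longrightarrow> is_partition T K P \<longrightarrow> is_partition T K Q \<longrightarrow>
       frob_sq_diff T (resc_equiv K P) (resc_equiv K Q) =
         2 * (\<Sum>k\<in>{1..K}. real (out_flow K P Q k + in_flow K P Q k) / real (card (P k)))
           * (1 + \<delta> T K P Q)) \<and>
    (\<forall>e>0. \<exists>\<eta>>0. \<forall>T K P Q. T \<ge> 1 \<longrightarrow> K \<ge> 1 \<longrightarrow> is_partition T K P \<longrightarrow> is_partition T K Q \<longrightarrow>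
       real K * m_PQ K P Q \<le> \<eta> \<longrightarrow> \<bar>\<delta> T K P Q\<bar> \<le> e)"
proof (intro exI[of _ "\<lambda>T K P Q. flow_delta K P Q"] conjI allI impI)
  fix T K P Q
  assume "is_partition T K P" "is_partition T K Q"
  then show "frob_sq_diff T (resc_equiv K P) (resc_equiv K Q) =
      2 * (\<Sum>k\<in>{1..K}. real (out_flow K P Q k + in_flow K P Q k) / real (card (P k)))
        * (1 + flow_delta K P Q)"
    by (rule frob_sq_diff_eq_flow_delta[unfolded rel_flow_def])
next
  fix e :: real
  assume e: "e > 0"
  show "\<exists>\<eta>>0. \<forall>T K P Q. T \<ge> 1 \<longrightarrow> K \<ge> 1 \<longrightarrow> is_partition T K P \<longrightarrow> is_partition T K Q \<longrightarrow>
      real K * m_PQ K P Q \<le> \<eta> \<longrightarrow> \<bar>flow_delta K P Q\<bar> \<le> e"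
  proof (intro exI[of _ "min (1/2) (e/2)"] conjI allI impI)
    fix T K P Q
    assume "K \<ge> 1" "is_partition T K P" "is_partition T K Q" and small: "real K * m_PQ K P Q \<le> min (1/2) (e/2)"
    then have "\<bar>flow_delta K P Q\<bar> \<le> 2 * (real K * m_PQ K P Q)"
      by (intro abs_flow_delta_le) auto
    with small show "\<bar>flow_delta K P Q\<bar> \<le> e" by linarith
  qed (use e in simp)
qed
end
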